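(* Let $f\colon\mathbb R\to\mathbb R$ be continuous with $|f(x)|\leqslant a\cosh(bx)$ for all $x$, for some $a>0$, $b\in\mathbb R$. Fix $\lambda>0$, let $P_n = e^{-\lambda}\lambda^n/n!$, and for $k\geqslant1$ let $h_k\colon y\mapsto f(y)/k$. Let $\mathbb P$ be the set of compactly supported Borel probability measures on $\mathbb R$ with the topology in which $\rho_n\to\rho$ iff $\int\phi\,d\rho_n\to\int\phi\,d\rho$ for all continuous compactly supported $\phi\colon\mathbb R\to\mathbb R$. For $x\in\mathbb R$ define the operators $$\Sigma^f_x(\rho) = \sum_{n=0}^\infty P_n\,(h_{n+1})_\star\big(\delta_x*\rho^{*n}\big),\qquad \Sigma^f(\rho) = \sum_{n=0}^\infty P_n\,(h_{n+1})_\star\big(\rho^{*(n+1)}\big),$$ where $(h_k)_\star$ is pushforward, $*$ is convolution and $\rho^{*0}=\delta_0$. Then $\Sigma^f_x$ and $\Sigma^f$ are continuous on $\mathbb P$ (with values in probability measures on $\mathbb R$ with the same weak topology).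
   Context: $\delta_a$ is the Dirac measure at $a$; $\cosh$ is the hyperbolic cosine. *)

theory Defs
  imports "HOL-Probability.Probability"
begin

primrec conv_pow :: "real measure \<Rightarrow> nat \<Rightarrow> real measure" where
  "conv_pow \<rho> 0 = return borel 0"
| "conv_pow \<rho> (Suc n) = convolution \<rho> (conv_pow \<rho> n)"

definition poisson_weight :: "real \<Rightarrow> nat \<Rightarrow> real" where
  "poisson_weight lam n = exp (- lam) * lam ^ n / fact n"

definition weighted_sum_measure :: "(nat \<Rightarrow> real) \<Rightarrow> (nat \<Rightarrow> real measure) \<Rightarrow> real measure" where
  "weighted_sum_measure w M =
     measure_of UNIV (sets borel) (\<lambda>A. \<Sum>n. ennreal (w n) * emeasure (M n) A)"

definition Sigma_x :: "(real \<Rightarrow> real) \<Rightarrow> real \<Rightarrow> real \<Rightarrow> real measure \<Rightarrow> real measure" where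
  "Sigma_x f lam x \<rho> = weighted_sum_measure (poisson_weight lam)
     (\<lambda>n. distr (convolution (return borel x) (conv_pow \<rho> n)) borel (\<lambda>y. f y / real (n + 1)))"

definition Sigma :: "(real \<Rightarrow> real) \<Rightarrow> real \<Rightarrow> real measure \<Rightarrow> real measure" where
  "Sigma f lam \<rho> = weighted_sum_measure (poisson_weight lam)
     (\<lambda>n. distr (conv_pow \<rho> (Suc n)) borel (\<lambda>y. f y / real (n + 1)))"

definition cs_prob :: "real measure set" where
  "cs_prob = {\<rho>. prob_space \<rho> \<and> sets \<rho> = sets borel \<and>
                  (\<exists>K. compact K \<and> K \<in> sets borel \<and> emeasure \<rho> K = 1)}"

definition cc_fun :: "(real \<Rightarrow> real) \<Rightarrow> bool" where
  "cc_fun \<phi> \<longleftrightarrow> continuous_on UNIV \<phi> \<and> (\<exists>K. compact K \<and> (\<forall>x. x \<notin> K \<longrightarrow> \<phi> x = 0))"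

definition vague_conv :: "(nat \<Rightarrow> real measure) \<Rightarrow> real measure \<Rightarrow> bool" where
  "vague_conv \<rho>s \<rho> \<longleftrightarrow>
     (\<forall>\<phi>. cc_fun \<phi> \<longrightarrow> (\<lambda>n. integral\<^sup>L (\<rho>s n) \<phi>) \<longlonglongrightarrow> integral\<^sup>L \<rho> \<phi>)"

end

theory Submission
  imports Defs
begin

text \<open>
  Vague convergence of probability measures to a compactly supported probability measure is
  already weak convergence: a cutoff function equal to 1 on the support of the limit shows that
  no mass escapes to infinity. Weak convergence is preserved by convolution (Levy's continuity
  theorem, characteristic functions multiply), by push-forward along continuous maps, and by
  mixing with a fixed probability weight (dominated convergence over the mixing index). Both
  operators are Poisson mixtures of push-forwards of convolution powers, hence continuous.
\<close>

lemma real_distribution_iff: "real_distribution M \<longleftrightarrow> prob_space M \<and> sets M = sets borel"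
  by (auto simp: real_distribution_def real_distribution_axioms_def)

lemma real_distribution_return: "real_distribution (return borel x)"
  by (simp add: real_distribution_iff prob_space_return)

lemma real_distribution_distr_continuous:
  assumes "real_distribution M" "continuous_on UNIV h"
  shows "real_distribution (distr M borel h)"
proof -
  interpret real_distribution M by fact
  show ?thesis
    using assms(2) by (intro real_distribution_distr) (simp add: borel_measurable_continuous_onI)
qed

lemma real_distribution_convolution:
  assumes "real_distribution M" "real_distribution N"
  shows "real_distribution (M \<star> N)"
proof -
  interpret M: real_distribution M by fact
  interpret N: real_distribution N by fact
  interpret pair_prob_space M N ..
  show ?thesis
    unfolding convolution_def by (intro real_distribution_distr) measurable
qed

lemma real_distribution_conv_pow:
  assumes "real_distribution \<rho>"
  shows "real_distribution (conv_pow \<rho> n)"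
  by (induction n) (simp_all add: real_distribution_return real_distribution_convolution assms)

lemma char_convolution:
  assumes "real_distribution M" "real_distribution N"
  shows "char (M \<star> N) t = char M t * char N t"
proof -
  interpret M: real_distribution M by fact
  interpret N: real_distribution N by fact
  interpret P: pair_prob_space M N ..
  have int: "integrable (M \<Otimes>\<^sub>M N) (\<lambda>(x, y). iexp (t * x) * iexp (t * y))"
    by (rule P.integrable_const_bound[where B=1]) (auto simp: norm_mult)
  have "char (M \<star> N) t = (\<integral>z. iexp (t * ((\<lambda>(x, y). x + y) z)) \<partial>(M \<Otimes>\<^sub>M N))"
    unfolding char_def convolution_def by (subst integral_distr) auto
  also have "\<dots> = (\<integral>z. (\<lambda>(x, y). iexp (t * x) * iexp (t * y)) z \<partial>(M \<Otimes>\<^sub>M N))"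
    by (intro Bochner_Integration.integral_cong) (auto simp: distrib_left mult_exp_exp algebra_simps)
  also have "\<dots> = (\<integral>x. (\<integral>y. iexp (t * x) * iexp (t * y) \<partial>N) \<partial>M)"
    using P.integral_fst'[OF int] by simp
  also have "\<dots> = char M t * char N t"
    unfolding char_def by simp
  finally show ?thesis .
qed

lemma weak_conv_m_const: "weak_conv_m (\<lambda>_. M) M"
  by (simp add: weak_conv_m_def weak_conv_def)

lemma weak_conv_convolution:
  assumes "\<And>k. real_distribution (Ms k)" "real_distribution M"
    and "\<And>k. real_distribution (Ns k)" "real_distribution N"
    and "weak_conv_m Ms M" "weak_conv_m Ns N"
  shows "weak_conv_m (\<lambda>k. Ms k \<star> Ns k) (M \<star> N)"
  using assms
  by (intro levy_continuity)
     (auto simp: char_convolution intro!: tendsto_mult levy_continuity1 real_distribution_convolution)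

lemma weak_conv_conv_pow:
  assumes "\<And>k. real_distribution (\<rho>s k)" "real_distribution \<rho>" "weak_conv_m \<rho>s \<rho>"
  shows "weak_conv_m (\<lambda>k. conv_pow (\<rho>s k) n) (conv_pow \<rho> n)"
  by (induction n)
     (simp_all add: weak_conv_m_const weak_conv_convolution real_distribution_conv_pow
        real_distribution_return assms)

lemma weak_conv_m_iff_integral_bdd_continuous_conv:
  assumes "\<And>n. real_distribution (Ms n)" "real_distribution M"
  shows "weak_conv_m Ms M \<longleftrightarrow>
    (\<forall>(g :: real \<Rightarrow> real) B. continuous_on UNIV g \<longrightarrow> (\<forall>x. \<bar>g x\<bar> \<le> B) \<longrightarrow>
       (\<lambda>n. integral\<^sup>L (Ms n) g) \<longlonglongrightarrow> integral\<^sup>L M g)"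
    (is "_ \<longleftrightarrow> ?bdd_conv")
proof
  assume "weak_conv_m Ms M"
  then show ?bdd_conv
    by (auto simp: continuous_on_eq_continuous_at
        intro!: weak_conv_imp_integral_bdd_continuous_conv[OF assms])
next
  assume ?bdd_conv
  then show "weak_conv_m Ms M"
    by (intro integral_bdd_continuous_conv_imp_weak_conv[OF assms])
      (auto simp: continuous_on_eq_continuous_at)
qed

lemma weak_conv_distr_continuous:
  assumes Ms: "\<And>k. real_distribution (Ms k)" and M: "real_distribution M"
    and conv: "weak_conv_m Ms M" and h: "continuous_on UNIV h"
  shows "weak_conv_m (\<lambda>k. distr (Ms k) borel h) (distr M borel h)"
proof -
  have integral_distr_h: "integral\<^sup>L (distr N borel h) g = integral\<^sup>L N (\<lambda>x. g (h x))"
    if "real_distribution N" "continuous_on UNIV g" for N and g :: "real \<Rightarrow> real"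
  proof -
    interpret real_distribution N by fact
    show ?thesis
      using h that(2) by (intro integral_distr) (simp_all add: borel_measurable_continuous_onI)
  qed
  show ?thesis
    using conv h
    by (auto simp: weak_conv_m_iff_integral_bdd_continuous_conv Ms M integral_distr_h
        real_distribution_distr_continuous intro: continuous_on_compose2[of UNIV])
qed

lemma weighted_sum_measure_pmf_eq_bind:
  assumes "\<And>n. real_distribution (M n)"
  shows "weighted_sum_measure (pmf p) M = measure_pmf p \<bind> M"
    (is "_ = ?B")
proof -
  have M: "M \<in> measure_pmf p \<rightarrow>\<^sub>M prob_algebra borel"
    using assms by (auto simp: space_prob_algebra real_distribution_iff)
  have p: "measure_pmf p \<in> space (prob_algebra (measure_pmf p))"
    by (simp add: space_prob_algebra prob_space_measure_pmf)
  have sets_B: "sets ?B = sets borel"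
    by (rule sets_bind'[OF p M])
  have "weighted_sum_measure (pmf p) M = measure_of UNIV (sets borel) (emeasure ?B)"
    unfolding weighted_sum_measure_def
  proof (rule measure_of_eq)
    fix A :: "real set" assume "A \<in> sigma_sets UNIV (sets borel)"
    then have "A \<in> sets borel" by (metis sets.sigma_sets_eq space_borel)
    then show "(\<Sum>n. ennreal (pmf p n) * emeasure (M n) A) = emeasure ?B A"
      by (simp add: emeasure_bind_prob_algebra[OF p M] nn_integral_measure_pmf
          nn_integral_count_space_nat mult.commute)
  qed simp
  also have "\<dots> = ?B"
    using sets_B sets_eq_imp_space_eq[OF sets_B] measure_of_of_measure[of ?B] by simp
  finally show ?thesis .
qed

lemma poisson_weight_eq_pmf: "lam > 0 \<Longrightarrow> poisson_weight lam = pmf (poisson_pmf lam)"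
  by (auto simp: poisson_weight_def)

lemma real_distribution_bind_pmf:
  assumes "\<And>n. real_distribution (M n)"
  shows "real_distribution (measure_pmf p \<bind> M)"
proof -
  have M: "M \<in> measure_pmf p \<rightarrow>\<^sub>M prob_algebra borel"
    using assms by (auto simp: space_prob_algebra real_distribution_iff)
  have p: "measure_pmf p \<in> space (prob_algebra (measure_pmf p))"
    by (simp add: space_prob_algebra prob_space_measure_pmf)
  show ?thesis
    using sets_bind'[OF p M] prob_space_bind'[OF p M] by (simp add: real_distribution_iff)
qed

lemma integral_bind_pmf_bounded:
  fixes g :: "real \<Rightarrow> real"
  assumes M: "\<And>n. real_distribution (M n)"
    and g: "g \<in> borel_measurable borel" "\<And>x. \<bar>g x\<bar> \<le> B"
  shows "integral\<^sup>L (measure_pmf p \<bind> M) g = (\<integral>n. integral\<^sup>L (M n) g \<partial>measure_pmf p)"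
proof (rule integral_bind[where K=borel and B'=1])
  show "M \<in> measure_pmf p \<rightarrow>\<^sub>M subprob_algebra borel"
    using M by (auto simp: space_subprob_algebra real_distribution_iff
        intro: prob_space_imp_subprob_space)
  show "AE n in measure_pmf p. emeasure (M n) (space (M n)) \<le> ennreal 1"
    using M by (simp add: real_distribution_iff prob_space.emeasure_space_1)
qed (use g in \<open>simp_all add: prob_space.finite_measure prob_space_measure_pmf\<close>)

lemma (in real_distribution) abs_integral_le:
  fixes g :: "real \<Rightarrow> real"
  assumes "g \<in> borel_measurable borel" "\<And>x. \<bar>g x\<bar> \<le> B"
  shows "\<bar>integral\<^sup>L M g\<bar> \<le> B"
proof -
  have "integrable M g"
    using assms by (intro integrable_const_bound[where B=B]) auto
  then have "integral\<^sup>L M (\<lambda>x. \<bar>g x\<bar>) \<le> B"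
    using assms by (intro integral_le_const) auto
  then show ?thesis
    using integral_abs_bound[of M g] by linarith
qed

lemma weak_conv_bind_pmf:
  assumes Ms: "\<And>k n. real_distribution (Ms k n)" and M: "\<And>n. real_distribution (M n)"
    and conv: "\<And>n. weak_conv_m (\<lambda>k. Ms k n) (M n)"
  shows "weak_conv_m (\<lambda>k. measure_pmf p \<bind> Ms k) (measure_pmf p \<bind> M)"
  unfolding weak_conv_m_iff_integral_bdd_continuous_conv[OF real_distribution_bind_pmf
      real_distribution_bind_pmf, OF Ms M]
proof (intro allI impI)
  fix g :: "real \<Rightarrow> real" and B
  assume g: "continuous_on UNIV g" "\<forall>x. \<bar>g x\<bar> \<le> B"
  then have g_meas: "g \<in> borel_measurable borel" and g_bound: "\<And>x. \<bar>g x\<bar> \<le> B"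
    by (simp_all add: borel_measurable_continuous_onI)
  have "(\<lambda>k. \<integral>n. integral\<^sup>L (Ms k n) g \<partial>measure_pmf p) \<longlonglongrightarrow> (\<integral>n. integral\<^sup>L (M n) g \<partial>measure_pmf p)"
  proof (rule integral_dominated_convergence[where w="\<lambda>_. B"])
    have "(\<lambda>k. integral\<^sup>L (Ms k n) g) \<longlonglongrightarrow> integral\<^sup>L (M n) g" for n
      using conv[of n] g unfolding weak_conv_m_iff_integral_bdd_continuous_conv[OF Ms M] by blast
    then show "AE n in measure_pmf p. (\<lambda>k. integral\<^sup>L (Ms k n) g) \<longlonglongrightarrow> integral\<^sup>L (M n) g"
      by simp
    show "AE n in measure_pmf p. norm (integral\<^sup>L (Ms k n) g) \<le> B" for k
      using real_distribution.abs_integral_le[OF Ms g_meas g_bound] by simp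
  qed (simp_all add: prob_space.finite_measure prob_space_measure_pmf
      finite_measure.integrable_const)
  then show "(\<lambda>k. integral\<^sup>L (measure_pmf p \<bind> Ms k) g) \<longlonglongrightarrow> integral\<^sup>L (measure_pmf p \<bind> M) g"
    by (simp add: integral_bind_pmf_bounded[OF Ms g_meas g_bound]
        integral_bind_pmf_bounded[OF M g_meas g_bound])
qed

lemma cc_fun_bounded:
  assumes "cc_fun \<phi>"
  shows "\<exists>B. \<forall>x. \<bar>\<phi> x\<bar> \<le> B"
proof -
  from assms obtain K where c: "continuous_on UNIV \<phi>" and K: "compact K" "\<forall>x. x \<notin> K \<longrightarrow> \<phi> x = 0"
    unfolding cc_fun_def by blast
  have "compact (\<phi> ` K)"
    using c K(1) by (intro compact_continuous_image continuous_on_subset[OF c]) auto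
  then obtain B where "\<forall>y\<in>\<phi> ` K. \<bar>y\<bar> \<le> B"
    using compact_imp_bounded bounded_real by blast
  then have "\<bar>\<phi> x\<bar> \<le> max B 0" for x
    using K(2) by (cases "x \<in> K") auto
  then show ?thesis by blast
qed

lemma weak_conv_imp_vague_conv:
  assumes "\<And>n. real_distribution (Ms n)" "real_distribution M" "weak_conv_m Ms M"
  shows "vague_conv Ms M"
  using assms cc_fun_bounded
  by (auto simp: vague_conv_def cc_fun_def weak_conv_m_iff_integral_bdd_continuous_conv)

lemma cc_fun_cutoff:
  assumes "compact K"
  obtains \<psi> where "cc_fun \<psi>" "\<And>x. 0 \<le> \<psi> x" "\<And>x. \<psi> x \<le> 1" "\<And>x. x \<in> K \<Longrightarrow> \<psi> x = 1"
proof -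
  obtain R where R: "\<forall>x\<in>K. \<bar>x\<bar> \<le> R"
    using compact_imp_bounded[OF assms] bounded_real by blast
  define \<psi> where "\<psi> x = max 0 (min 1 (R + 1 - \<bar>x\<bar>))" for x :: real
  have "cc_fun \<psi>"
    unfolding cc_fun_def
    by (intro conjI exI[of _ "{-R-1..R+1}"]) (auto simp: \<psi>_def intro!: continuous_intros)
  moreover have "\<psi> x = 1" if "x \<in> K" for x
    using R that by (force simp: \<psi>_def)
  ultimately show thesis
    by (intro that[of \<psi>]) (auto simp: \<psi>_def)
qed

lemma cc_fun_mult_continuous:
  assumes "cc_fun \<psi>" "continuous_on UNIV g"
  shows "cc_fun (\<lambda>x. g x * \<psi> x)"
  using assms unfolding cc_fun_def by (fastforce intro!: continuous_intros)

lemma (in real_distribution) integral_cutoff_error_le: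
  fixes g \<psi> :: "real \<Rightarrow> real"
  assumes g: "g \<in> borel_measurable borel" "\<And>x. \<bar>g x\<bar> \<le> B"
    and \<psi>: "\<psi> \<in> borel_measurable borel" "\<And>x. 0 \<le> \<psi> x" "\<And>x. \<psi> x \<le> 1"
  shows "\<bar>integral\<^sup>L M g - integral\<^sup>L M (\<lambda>x. g x * \<psi> x)\<bar> \<le> B * (1 - integral\<^sup>L M \<psi>)"
proof -
  have g\<psi>: "\<bar>g x * \<psi> x\<bar> \<le> B" for x
    using g(2)[of x] \<psi>(2,3)[of x] by (simp add: abs_mult) (metis abs_ge_zero mult_left_le order_trans)
  have int_g: "integrable M g" and int_g\<psi>: "integrable M (\<lambda>x. g x * \<psi> x)"
    using g \<psi> g\<psi> by (auto intro!: integrable_const_bound[where B=B])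
  have int_\<psi>: "integrable M \<psi>"
    using \<psi> by (intro integrable_const_bound[where B=1]) auto
  have "\<bar>integral\<^sup>L M g - integral\<^sup>L M (\<lambda>x. g x * \<psi> x)\<bar> = \<bar>integral\<^sup>L M (\<lambda>x. g x * (1 - \<psi> x))\<bar>"
    using int_g int_g\<psi> by (simp add: algebra_simps)
  also have "\<dots> \<le> integral\<^sup>L M (\<lambda>x. B * (1 - \<psi> x))"
  proof (rule integral_abs_bound_integral)
    show "\<bar>g x * (1 - \<psi> x)\<bar> \<le> B * (1 - \<psi> x)" for x
      using g(2)[of x] \<psi>(3)[of x] by (simp add: abs_mult mult_right_mono)
  qed (use int_g int_g\<psi> int_\<psi> in \<open>auto simp: algebra_simps\<close>)
  also have "\<dots> = B * (1 - integral\<^sup>L M \<psi>)"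
    using int_\<psi> prob_space by (simp add: algebra_simps)
  finally show ?thesis .
qed

lemma vague_conv_imp_weak_conv:
  assumes Ms: "\<And>n. real_distribution (Ms n)" and M: "real_distribution M"
    and K: "compact K" "emeasure M K = 1"
    and conv: "vague_conv Ms M"
  shows "weak_conv_m Ms M"
  unfolding weak_conv_m_iff_integral_bdd_continuous_conv[OF Ms M]
proof (intro allI impI)
  fix g :: "real \<Rightarrow> real" and B
  assume g: "continuous_on UNIV g" "\<forall>x. \<bar>g x\<bar> \<le> B"
  then have g_meas: "g \<in> borel_measurable borel" and g_bound: "\<And>x. \<bar>g x\<bar> \<le> B"
    by (simp_all add: borel_measurable_continuous_onI)
  obtain \<psi> where \<psi>: "cc_fun \<psi>" "\<And>x. 0 \<le> \<psi> x" "\<And>x. \<psi> x \<le> 1" "\<And>x. x \<in> K \<Longrightarrow> \<psi> x = 1"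
    using cc_fun_cutoff[OF K(1)] by blast
  have \<psi>_meas: "\<psi> \<in> borel_measurable borel"
    using \<psi>(1) by (simp add: cc_fun_def borel_measurable_continuous_onI)
  interpret M: real_distribution M by (rule M)
  have "AE x in M. x \<in> K"
    using K compact_imp_closed by (intro M.AE_prob_1) (auto simp: M.emeasure_eq_measure)
  then have "AE x in M. \<psi> x = 1"
    using \<psi>(4) by auto
  then have int_g\<psi>: "integral\<^sup>L M (\<lambda>x. g x * \<psi> x) = integral\<^sup>L M g"
    and "integral\<^sup>L M \<psi> = integral\<^sup>L M (\<lambda>_. 1)"
    using g_meas \<psi>_meas by (intro integral_cong_AE; auto)+
  then have int_\<psi>: "integral\<^sup>L M \<psi> = 1"
    using M.prob_space by simp
  have lim_g\<psi>: "(\<lambda>n. integral\<^sup>L (Ms n) (\<lambda>x. g x * \<psi> x)) \<longlonglongrightarrow> integral\<^sup>L M g"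
    using conv cc_fun_mult_continuous[OF \<psi>(1) g(1)] unfolding vague_conv_def int_g\<psi>[symmetric]
    by blast
  have "(\<lambda>n. B * (1 - integral\<^sup>L (Ms n) \<psi>)) \<longlonglongrightarrow> B * (1 - 1)"
    using conv \<psi>(1) unfolding vague_conv_def int_\<psi>[symmetric] by (intro tendsto_intros) blast
  then have cutoff_error: "(\<lambda>n. B * (1 - integral\<^sup>L (Ms n) \<psi>)) \<longlonglongrightarrow> 0"
    by simp
  have "(\<lambda>n. integral\<^sup>L (Ms n) g - integral\<^sup>L (Ms n) (\<lambda>x. g x * \<psi> x)) \<longlonglongrightarrow> 0"
  proof (rule Lim_null_comparison[OF always_eventually[OF allI] cutoff_error])
    show "norm (integral\<^sup>L (Ms n) g - integral\<^sup>L (Ms n) (\<lambda>x. g x * \<psi> x))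
        \<le> B * (1 - integral\<^sup>L (Ms n) \<psi>)" for n
      using real_distribution.integral_cutoff_error_le[OF Ms g_meas g_bound \<psi>_meas \<psi>(2,3)] by simp
  qed
  from tendsto_add[OF this lim_g\<psi>] show "(\<lambda>n. integral\<^sup>L (Ms n) g) \<longlonglongrightarrow> integral\<^sup>L M g"
    by simp
qed

lemma cs_prob_vague_conv_imp_weak_conv:
  assumes "\<And>n. \<rho>s n \<in> cs_prob" "\<rho> \<in> cs_prob" "vague_conv \<rho>s \<rho>"
  shows "weak_conv_m \<rho>s \<rho>"
  using assms vague_conv_imp_weak_conv by (fastforce simp: cs_prob_def real_distribution_iff)

lemma real_distribution_poisson_mixture:
  assumes "lam > 0" "\<And>n. real_distribution (M n)"
  shows "real_distribution (weighted_sum_measure (poisson_weight lam) M)"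
  using assms
  by (simp add: poisson_weight_eq_pmf weighted_sum_measure_pmf_eq_bind real_distribution_bind_pmf)

lemma weak_conv_poisson_mixture:
  assumes "lam > 0" "\<And>k n. real_distribution (Ms k n)" "\<And>n. real_distribution (M n)"
    and "\<And>n. weak_conv_m (\<lambda>k. Ms k n) (M n)"
  shows "weak_conv_m (\<lambda>k. weighted_sum_measure (poisson_weight lam) (Ms k))
    (weighted_sum_measure (poisson_weight lam) M)"
  using assms
  by (simp add: poisson_weight_eq_pmf weighted_sum_measure_pmf_eq_bind weak_conv_bind_pmf)

text \<open>
  Continuity uses only that \<open>f\<close> is continuous.
\<close>

theorem theorem6:
  fixes f :: "real \<Rightarrow> real" and a b lam :: real
  assumes "continuous_on UNIV f"
    and "a > 0"
    and "\<And>x. \<bar>f x\<bar> \<le> a * cosh (b * x)"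
    and "lam > 0"
  shows "(\<forall>x. \<forall>\<rho>\<in>cs_prob. prob_space (Sigma_x f lam x \<rho>) \<and> sets (Sigma_x f lam x \<rho>) = sets borel)
       \<and> (\<forall>\<rho>\<in>cs_prob. prob_space (Sigma f lam \<rho>) \<and> sets (Sigma f lam \<rho>) = sets borel)
       \<and> (\<forall>x \<rho>s \<rho>. (\<forall>n. \<rho>s n \<in> cs_prob) \<longrightarrow> \<rho> \<in> cs_prob \<longrightarrow> vague_conv \<rho>s \<rho> \<longrightarrow>
             vague_conv (\<lambda>n. Sigma_x f lam x (\<rho>s n)) (Sigma_x f lam x \<rho>))
       \<and> (\<forall>\<rho>s \<rho>. (\<forall>n. \<rho>s n \<in> cs_prob) \<longrightarrow> \<rho> \<in> cs_prob \<longrightarrow> vague_conv \<rho>s \<rho> \<longrightarrow>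
             vague_conv (\<lambda>n. Sigma f lam (\<rho>s n)) (Sigma f lam \<rho>))"
proof -
  have h: "continuous_on UNIV (\<lambda>y. f y / real (n + 1))" for n
    using assms(1) by (intro continuous_intros) auto
  have rd: "real_distribution \<rho>" if "\<rho> \<in> cs_prob" for \<rho>
    using that by (simp add: cs_prob_def real_distribution_iff)
  have Sigma_x_rd: "real_distribution (Sigma_x f lam x \<rho>)" if "real_distribution \<rho>" for x \<rho>
    unfolding Sigma_x_def
    by (intro real_distribution_poisson_mixture real_distribution_distr_continuous
        real_distribution_convolution real_distribution_return real_distribution_conv_pow h assms(4) that)
  have Sigma_rd: "real_distribution (Sigma f lam \<rho>)" if "real_distribution \<rho>" for \<rho>
    unfolding Sigma_def
    by (intro real_distribution_poisson_mixture real_distribution_distr_continuous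
        real_distribution_conv_pow h assms(4) that)
  have Sigma_x_conv: "weak_conv_m (\<lambda>k. Sigma_x f lam x (\<rho>s k)) (Sigma_x f lam x \<rho>)"
    and Sigma_conv: "weak_conv_m (\<lambda>k. Sigma f lam (\<rho>s k)) (Sigma f lam \<rho>)"
    if "\<And>k. real_distribution (\<rho>s k)" "real_distribution \<rho>" "weak_conv_m \<rho>s \<rho>" for x \<rho>s \<rho>
    unfolding Sigma_x_def Sigma_def
    by (intro weak_conv_poisson_mixture weak_conv_distr_continuous real_distribution_distr_continuous
        weak_conv_convolution weak_conv_m_const weak_conv_conv_pow real_distribution_convolution
        real_distribution_return real_distribution_conv_pow h assms(4) that)+
  show ?thesis
    unfolding real_distribution_iff[symmetric]
    using rd Sigma_x_rd Sigma_rd cs_prob_vague_conv_imp_weak_conv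
    by (auto intro!: weak_conv_imp_vague_conv Sigma_x_conv Sigma_conv)
qed

end
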